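(* Let $p\geq 1$, $N\in\mathbb{N}$, and let $\Psi$ be the set of functions $\psi:\mathbb{R}^N\to\mathbb{R}$ such that $$|\psi(\tilde{\boldsymbol\xi})-\psi(\widehat{\boldsymbol\xi})|\leq \frac1N\sum_{k=1}^N c_p(\tilde\xi^k,\widehat\xi^k)\,|\tilde\xi^k-\widehat\xi^k|\quad\text{for all }\tilde{\boldsymbol\xi}=(\tilde\xi^1,\dots,\tilde\xi^N),\ \widehat{\boldsymbol\xi}=(\widehat\xi^1,\dots,\widehat\xi^N)\in\mathbb{R}^N.$$ Then for all $P,Q\in\mathscr{P}_p(\mathbb{R})$, $$\mathsf{d}_\Psi(P^{\otimes N},Q^{\otimes N})\leq \mathsf{d}_{FM,p}(P,Q)<+\infty,$$ where $\mathsf{d}_\Psi(\mu,\nu)=\sup_{\psi\in\Psi}\left|\int_{\mathbb{R}^N}\psi\,d\mu-\int_{\mathbb{R}^N}\psi\,d\nu\right|$ and $P^{\otimes N}$, $Q^{\otimes N}$ are the $N$-fold product measures on $\mathbb{R}^N$.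
   Context: $\mathscr{P}(\mathbb{R})$ is the set of Borel probability measures on $\mathbb{R}$. For $p\geq1$, $c_p(\xi,\tilde\xi)=\max\{1,|\xi|,|\tilde\xi|\}^{p-1}$; $\mathcal{F}_p(\mathbb{R})$ is the set of $\psi:\mathbb{R}\to\mathbb{R}$ with $|\psi(\xi)-\psi(\tilde\xi)|\leq c_p(\xi,\tilde\xi)|\xi-\tilde\xi|$ for all $\xi,\tilde\xi$; the Fortet–Mourier metric is $\mathsf{d}_{FM,p}(P,Q)=\sup_{\psi\in\mathcal{F}_p(\mathbb{R})}|\int\psi\,dP-\int\psi\,dQ|$; and $\mathscr{P}_p(\mathbb{R})=\{P\in\mathscr{P}(\mathbb{R}):\mathsf{d}_{FM,p}(P,\delta_0)<+\infty\}$, with $\delta_0$ the Dirac measure at $0$. *)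

theory Defs
  imports "HOL-Probability.Probability"
begin

definition cp :: "real \<Rightarrow> real \<Rightarrow> real \<Rightarrow> real" where
  "cp p x y = (max 1 (max \<bar>x\<bar> \<bar>y\<bar>)) powr (p - 1)"

definition Fp :: "real \<Rightarrow> (real \<Rightarrow> real) set" where
  "Fp p = {\<psi>. \<forall>x y. \<bar>\<psi> x - \<psi> y\<bar> \<le> cp p x y * \<bar>x - y\<bar>}"

text \<open>|int psi dM - int psi dN|, taken to be +infinity when psi is not integrable
  w.r.t. one of the measures (the difference of integrals is then not a finite real).\<close>
definition int_diff :: "'a measure \<Rightarrow> 'a measure \<Rightarrow> ('a \<Rightarrow> real) \<Rightarrow> ereal" where
  "int_diff M N \<psi> = (if integrable M \<psi> \<and> integrable N \<psi>
      then ereal \<bar>integral\<^sup>L M \<psi> - integral\<^sup>L N \<psi>\<bar> else \<infinity>)"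

definition dFM :: "real \<Rightarrow> real measure \<Rightarrow> real measure \<Rightarrow> ereal" where
  "dFM p P Q = (SUP \<psi>\<in>Fp p. int_diff P Q \<psi>)"

definition Pp :: "real \<Rightarrow> real measure set" where
  "Pp p = {P. prob_space P \<and> sets P = sets borel \<and> dFM p P (return borel 0) < \<infinity>}"

text \<open>The class Psi on R^N, with R^N represented as functions 'n => real for a finite
  index type 'n with N = CARD('n).\<close>
definition PsiN :: "real \<Rightarrow> (('n::finite \<Rightarrow> real) \<Rightarrow> real) set" where
  "PsiN p = {\<psi>. \<forall>x y. \<bar>\<psi> x - \<psi> y\<bar>
       \<le> (1 / real CARD('n)) * (\<Sum>k\<in>UNIV. cp p (x k) (y k) * \<bar>x k - y k\<bar>)}"

definition dPsi :: "real \<Rightarrow> ('n::finite \<Rightarrow> real) measure \<Rightarrow> ('n \<Rightarrow> real) measure \<Rightarrow> ereal" where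
  "dPsi p M N = (SUP \<psi>\<in>PsiN p. int_diff M N \<psi>)"

end

theory Submission
  imports Defs
begin

text \<open>Hybrid argument. Let \<open>M\<^sub>S\<close> be the product measure with factor \<open>P\<close> at the
  coordinates in \<open>S\<close> and \<open>Q\<close> elsewhere. Passing from \<open>M\<^sub>S\<close> to \<open>M\<^bsub>S \<union> {j}\<^esub>\<close>
  changes a single factor, so by Fubini the change of \<open>\<integral>\<psi>\<close> is an average over the other
  coordinates of the change of \<open>\<integral>\<psi>(x(j := t)) dt\<close>. Since \<open>N \<cdot> \<psi>(x(j := \<cdot>))\<close> lies in
  \<open>F\<^sub>p\<close>, each step costs at most \<open>d\<^sub>F\<^sub>M(P,Q)/N\<close>, and \<open>N\<close> steps lead from
  \<open>Q\<^sup>N\<close> to \<open>P\<^sup>N\<close>. Finiteness of \<open>d\<^sub>F\<^sub>M(P,Q)\<close> is the triangle inequality through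
  \<open>\<delta>\<^sub>0\<close>; integrability of \<open>\<psi>\<close> comes from
  \<open>|\<psi> x| \<le> |\<psi> 0| + (1/N) \<Sum>\<^sub>k c\<^sub>p(x\<^sub>k,0) |x\<^sub>k|\<close>, each summand being \<open>p\<close> times a member
  of \<open>F\<^sub>p\<close>.\<close>

lemma int_diff_nonneg: "0 \<le> int_diff M N f"
  unfolding int_diff_def by simp

lemma int_diff_commute: "int_diff M N f = int_diff N M f"
  unfolding int_diff_def by (auto simp: abs_minus_commute)

lemma int_diff_triangle: "int_diff M K f \<le> int_diff M N f + int_diff N K f"
  unfolding int_diff_def by auto

lemma int_diff_le_dFM: "f \<in> Fp p \<Longrightarrow> int_diff P Q f \<le> dFM p P Q"
  unfolding dFM_def by (rule SUP_upper)

lemma dFM_nonneg: "0 \<le> dFM p P Q"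
proof -
  have "(\<lambda>_. 0) \<in> Fp p"
    unfolding Fp_def cp_def by simp
  then show ?thesis
    using int_diff_le_dFM int_diff_nonneg order_trans by blast
qed

lemma dFM_commute: "dFM p P Q = dFM p Q P"
  unfolding dFM_def by (simp add: int_diff_commute)

lemma dFM_triangle: "dFM p P R \<le> dFM p P Q + dFM p Q R"
  unfolding dFM_def[of p P R]
proof (rule SUP_least)
  fix f assume "f \<in> Fp p"
  then have "int_diff P Q f + int_diff Q R f \<le> dFM p P Q + dFM p Q R"
    by (intro add_mono int_diff_le_dFM)
  then show "int_diff P R f \<le> dFM p P Q + dFM p Q R"
    using int_diff_triangle order_trans by blast
qed

lemma dFM_finite:
  assumes "P \<in> Pp p" "Q \<in> Pp p"
  shows "dFM p P Q < \<infinity>"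
proof -
  have "dFM p P (return borel 0) < \<infinity>" "dFM p (return borel 0) Q < \<infinity>"
    using assms by (auto simp: Pp_def dFM_commute)
  then have "dFM p P (return borel 0) + dFM p (return borel 0) Q < \<infinity>"
    by simp
  then show ?thesis
    using dFM_triangle le_less_trans by blast
qed

lemma ereal_real_dFM:
  assumes "P \<in> Pp p" "Q \<in> Pp p"
  shows "ereal (real_of_ereal (dFM p P Q)) = dFM p P Q"
  using dFM_nonneg[of p P Q] dFM_finite[OF assms] by (cases "dFM p P Q") auto

lemma integrable_of_Pp:
  assumes "P \<in> Pp p" "f \<in> Fp p"
  shows "integrable P f"
proof (rule ccontr)
  assume "\<not> integrable P f"
  then have "int_diff P (return borel 0) f = \<infinity>"
    unfolding int_diff_def by simp
  with int_diff_le_dFM[OF assms(2), of P "return borel 0"] assms(1) show False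
    unfolding Pp_def by auto
qed

lemma integral_diff_le_dFM:
  assumes "P \<in> Pp p" "Q \<in> Pp p" "f \<in> Fp p"
  shows "\<bar>integral\<^sup>L P f - integral\<^sup>L Q f\<bar> \<le> real_of_ereal (dFM p P Q)"
proof -
  have "ereal \<bar>integral\<^sup>L P f - integral\<^sup>L Q f\<bar> \<le> dFM p P Q"
    using int_diff_le_dFM[OF assms(3), of P Q] integrable_of_Pp[OF assms(1,3)]
      integrable_of_Pp[OF assms(2,3)]
    unfolding int_diff_def by simp
  then show ?thesis
    by (metis ereal_less_eq(3) ereal_real_dFM[OF assms(1,2)])
qed

lemma powr_diff_le_tangent:
  fixes p r s :: real
  assumes p: "1 \<le> p" and r: "0 < r" and rs: "r \<le> s"
  shows "s powr p - r powr p \<le> p * s powr (p - 1) * (s - r)"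
proof (cases "r = s")
  case False
  then have lt: "r < s"
    using rs by simp
  have deriv: "\<And>x. r \<le> x \<Longrightarrow> x \<le> s \<Longrightarrow> DERIV (\<lambda>x. x powr p) x :> p * x powr (p - 1)"
    using r by (intro has_real_derivative_powr) auto
  obtain z where z: "r < z" "z < s"
    and mvt: "s powr p - r powr p = (s - r) * (p * z powr (p - 1))"
    using MVT2[OF lt deriv] by blast
  have "z powr (p - 1) \<le> s powr (p - 1)"
    using z r p by (intro powr_mono2) auto
  then have "(s - r) * (p * z powr (p - 1)) \<le> (s - r) * (p * s powr (p - 1))"
    using z p by (intro mult_left_mono) auto
  then show ?thesis
    using mvt by (simp add: algebra_simps)
qed simp

definition fm_weight :: "real \<Rightarrow> real \<Rightarrow> real" where
  "fm_weight p t = cp p t 0 * \<bar>t\<bar>"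

text \<open>The convex part \<open>max 1 |t| powr p\<close> plus the 1-Lipschitz part \<open>|t| - max 1 |t|\<close>.\<close>

lemma fm_weight_eq: "fm_weight p t = max 1 \<bar>t\<bar> powr p + \<bar>t\<bar> - max 1 \<bar>t\<bar>"
proof (cases "\<bar>t\<bar> \<le> 1")
  case False
  then have "\<bar>t\<bar> powr (p - 1) * \<bar>t\<bar> = \<bar>t\<bar> powr p"
    by (simp add: powr_diff)
  with False show ?thesis
    unfolding fm_weight_def cp_def by simp
qed (simp add: fm_weight_def cp_def)

lemma fm_weight_Lipschitz:
  assumes p: "1 \<le> p"
  shows "\<bar>fm_weight p x - fm_weight p y\<bar> \<le> p * (cp p x y * \<bar>x - y\<bar>)"
proof -
  have main: "\<bar>fm_weight p y - fm_weight p x\<bar> \<le> p * (cp p x y * \<bar>x - y\<bar>)"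
    if xy: "\<bar>x\<bar> \<le> \<bar>y\<bar>" for x y
  proof -
    define a b where "a = max 1 \<bar>x\<bar>" and "b = max 1 \<bar>y\<bar>"
    have ab: "1 \<le> a" "a \<le> b" "b - a \<le> \<bar>y\<bar> - \<bar>x\<bar>" "\<bar>y\<bar> - \<bar>x\<bar> \<le> \<bar>x - y\<bar>"
      using xy unfolding a_def b_def by auto
    have cp_eq: "cp p x y = b powr (p - 1)"
      using xy unfolding cp_def b_def by (simp add: max_def)
    have "1 \<le> b powr (p - 1)"
      using ab p by (intro ge_one_powr_ge_zero) auto
    then have "1 * 1 \<le> p * b powr (p - 1)"
      using p by (intro mult_mono) auto
    then have slope: "1 \<le> p * b powr (p - 1)"
      by simp
    have diff: "fm_weight p y - fm_weight p x = (b powr p - a powr p) - (b - a) + (\<bar>y\<bar> - \<bar>x\<bar>)"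
      unfolding fm_weight_eq a_def b_def by simp
    have "a powr p \<le> b powr p"
      using ab p by (intro powr_mono2) auto
    then have lower: "0 \<le> fm_weight p y - fm_weight p x"
      using diff ab by linarith
    have "b powr p - a powr p \<le> p * b powr (p - 1) * (b - a)"
      using ab p by (intro powr_diff_le_tangent) auto
    then have "fm_weight p y - fm_weight p x \<le> (p * b powr (p - 1) - 1) * (b - a) + (\<bar>y\<bar> - \<bar>x\<bar>)"
      unfolding diff by (simp add: algebra_simps)
    also have "\<dots> \<le> (p * b powr (p - 1) - 1) * (\<bar>y\<bar> - \<bar>x\<bar>) + (\<bar>y\<bar> - \<bar>x\<bar>)"
      using slope ab by (intro add_right_mono mult_left_mono) auto
    also have "\<dots> = p * b powr (p - 1) * (\<bar>y\<bar> - \<bar>x\<bar>)"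
      by (simp add: algebra_simps)
    also have "\<dots> \<le> p * b powr (p - 1) * \<bar>x - y\<bar>"
      using slope ab by (intro mult_left_mono) auto
    finally show ?thesis
      using lower cp_eq by simp
  qed
  show ?thesis
  proof (cases "\<bar>x\<bar> \<le> \<bar>y\<bar>")
    case True
    then show ?thesis using main by (simp add: abs_minus_commute)
  next
    case False
    then have "\<bar>fm_weight p x - fm_weight p y\<bar> \<le> p * (cp p y x * \<bar>y - x\<bar>)"
      using main[of y x] by simp
    then show ?thesis
      by (simp add: cp_def max.commute abs_minus_commute)
  qed
qed

lemma fm_weight_div_Fp: "1 \<le> p \<Longrightarrow> (\<lambda>t. fm_weight p t / p) \<in> Fp p"
  using fm_weight_Lipschitz
  by (auto simp: Fp_def diff_divide_distrib[symmetric] pos_divide_le_eq mult.commute)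

lemma integrable_fm_weight:
  assumes "1 \<le> p" "P \<in> Pp p"
  shows "integrable P (fm_weight p)"
proof -
  have "integrable P (\<lambda>t. p * (fm_weight p t / p))"
    using integrable_of_Pp[OF assms(2) fm_weight_div_Fp[OF assms(1)]]
    by (rule integrable_mult_right)
  then show ?thesis
    using assms(1) by simp
qed

lemma (in product_sigma_finite) product_integrable_insert:
  fixes f :: "_ \<Rightarrow> real"
  assumes I: "finite I" "i \<notin> I"
    and f: "integrable (Pi\<^sub>M (insert i I) M) f"
  shows "integrable (Pi\<^sub>M I M) (\<lambda>x. \<integral>y. f (x(i:=y)) \<partial>M i)"
proof -
  interpret I: finite_product_sigma_finite M I by standard fact
  interpret J: finite_product_sigma_finite M "{i}" by standard simp
  interpret P: pair_sigma_finite "Pi\<^sub>M I M" "Pi\<^sub>M {i} M" ..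
  have "distr (Pi\<^sub>M I M \<Otimes>\<^sub>M Pi\<^sub>M {i} M) (Pi\<^sub>M (I \<union> {i}) M) (merge I {i}) = Pi\<^sub>M (I \<union> {i}) M"
    by (rule distr_merge) (use I in auto)
  then have "integrable (distr (Pi\<^sub>M I M \<Otimes>\<^sub>M Pi\<^sub>M {i} M) (Pi\<^sub>M (I \<union> {i}) M) (merge I {i})) f"
    using f by simp
  then have "integrable (Pi\<^sub>M I M \<Otimes>\<^sub>M Pi\<^sub>M {i} M) (\<lambda>x. f (merge I {i} x))"
    by (rule integrable_distr[OF measurable_merge])
  then have merged: "integrable (Pi\<^sub>M I M) (\<lambda>x. \<integral>y. f (merge I {i} (x, y)) \<partial>Pi\<^sub>M {i} M)"
    by (rule P.integrable_fst')
  have slice: "(\<integral>y. f (merge I {i} (x, y)) \<partial>Pi\<^sub>M {i} M) = (\<integral>y. f (x(i := y)) \<partial>M i)"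
    if x: "x \<in> space (Pi\<^sub>M I M)" for x
  proof -
    have "(\<lambda>y. f (x(i := y))) \<in> borel_measurable (M i)"
      using measurable_comp[OF measurable_component_update borel_measurable_integrable[OF f], OF x I(2)]
      unfolding comp_def .
    then have "(\<integral>y. f (x(i := y i)) \<partial>Pi\<^sub>M {i} M) = (\<integral>y. f (x(i := y)) \<partial>M i)"
      by (rule product_integral_singleton)
    moreover have "(\<integral>y. f (merge I {i} (x, y)) \<partial>Pi\<^sub>M {i} M) = (\<integral>y. f (x(i := y i)) \<partial>Pi\<^sub>M {i} M)"
      using x I by (auto intro!: Bochner_Integration.integral_cong arg_cong[where f=f]
          simp: merge_def space_PiM extensional_def PiE_def)
    ultimately show ?thesis by simp
  qed
  have "integrable (Pi\<^sub>M I M) (\<lambda>x. \<integral>y. f (merge I {i} (x, y)) \<partial>Pi\<^sub>M {i} M)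
      \<longleftrightarrow> integrable (Pi\<^sub>M I M) (\<lambda>x. \<integral>y. f (x(i := y)) \<partial>M i)"
    using slice by (intro Bochner_Integration.integrable_cong) simp_all
  with merged show ?thesis
    by simp
qed

lemma integral_PiM_diff_le_coordinate:
  fixes f :: "('i \<Rightarrow> 'a) \<Rightarrow> real"
  assumes I: "finite I" "j \<in> I"
    and M: "\<And>i. prob_space (M i)" and M': "\<And>i. prob_space (M' i)"
    and same: "\<And>i. i \<in> I \<Longrightarrow> i \<noteq> j \<Longrightarrow> M i = M' i"
    and f: "integrable (Pi\<^sub>M I M) f" and f': "integrable (Pi\<^sub>M I M') f"
    and slice: "\<And>x. \<bar>(\<integral>t. f (x(j := t)) \<partial>M j) - (\<integral>t. f (x(j := t)) \<partial>M' j)\<bar> \<le> c"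
  shows "\<bar>integral\<^sup>L (Pi\<^sub>M I M) f - integral\<^sup>L (Pi\<^sub>M I M') f\<bar> \<le> c"
proof -
  define J where "J = I - {j}"
  have J: "finite J" "j \<notin> J" "I = insert j J"
    using I unfolding J_def by auto
  interpret A: product_sigma_finite M
    by (simp add: product_sigma_finite_def prob_space_imp_sigma_finite M)
  interpret B: product_sigma_finite M'
    by (simp add: product_sigma_finite_def prob_space_imp_sigma_finite M')
  interpret PJ: prob_space "Pi\<^sub>M J M"
    by (intro prob_space_PiM M)
  have PiJ: "Pi\<^sub>M J M' = Pi\<^sub>M J M"
    using same unfolding J_def by (intro PiM_cong) auto
  let ?g = "\<lambda>x. \<integral>t. f (x(j := t)) \<partial>M j" and ?g' = "\<lambda>x. \<integral>t. f (x(j := t)) \<partial>M' j"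
  have fJ: "integrable (Pi\<^sub>M (insert j J) M) f" and fJ': "integrable (Pi\<^sub>M (insert j J) M') f"
    using f f' J(3) by simp_all
  have g: "integrable (Pi\<^sub>M J M) ?g" and g': "integrable (Pi\<^sub>M J M) ?g'"
    using A.product_integrable_insert[OF J(1,2) fJ] B.product_integrable_insert[OF J(1,2) fJ'] PiJ
    by simp_all
  have "integral\<^sup>L (Pi\<^sub>M I M) f - integral\<^sup>L (Pi\<^sub>M I M') f
      = integral\<^sup>L (Pi\<^sub>M J M) ?g - integral\<^sup>L (Pi\<^sub>M J M) ?g'"
    using A.product_integral_insert[OF J(1,2) fJ] B.product_integral_insert[OF J(1,2) fJ'] PiJ J(3)
    by simp
  also have "\<dots> = integral\<^sup>L (Pi\<^sub>M J M) (\<lambda>x. ?g x - ?g' x)"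
    using g g' by simp
  finally have "\<bar>integral\<^sup>L (Pi\<^sub>M I M) f - integral\<^sup>L (Pi\<^sub>M I M') f\<bar>
      \<le> integral\<^sup>L (Pi\<^sub>M J M) (\<lambda>x. \<bar>?g x - ?g' x\<bar>)"
    by (simp add: integral_abs_bound)
  also have "\<dots> \<le> integral\<^sup>L (Pi\<^sub>M J M) (\<lambda>_. c)"
    using g g' slice by (intro Bochner_Integration.integral_mono) auto
  finally show ?thesis
    by (simp add: PJ.prob_space)
qed

definition hybrid :: "'a measure \<Rightarrow> 'a measure \<Rightarrow> 'i set \<Rightarrow> 'i \<Rightarrow> 'a measure" where
  "hybrid P Q S i = (if i \<in> S then P else Q)"

lemma integral_PiM_diff_le_hybrid:
  fixes f :: "('i \<Rightarrow> 'a) \<Rightarrow> real"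
  assumes "prob_space P" "prob_space Q" "finite I"
    and int: "\<And>S. integrable (Pi\<^sub>M I (hybrid P Q S)) f"
    and slice: "\<And>j x. \<bar>(\<integral>t. f (x(j := t)) \<partial>P) - (\<integral>t. f (x(j := t)) \<partial>Q)\<bar> \<le> c"
  shows "\<bar>integral\<^sup>L (Pi\<^sub>M I (\<lambda>_. P)) f - integral\<^sup>L (Pi\<^sub>M I (\<lambda>_. Q)) f\<bar> \<le> real (card I) * c"
proof -
  have telescope: "\<bar>integral\<^sup>L (Pi\<^sub>M I (hybrid P Q S)) f - integral\<^sup>L (Pi\<^sub>M I (hybrid P Q {})) f\<bar>
      \<le> real (card S) * c" if "S \<subseteq> I" for S
    using finite_subset[OF that \<open>finite I\<close>] that
  proof (induction S rule: finite_induct)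
    case (insert j S)
    have "\<bar>integral\<^sup>L (Pi\<^sub>M I (hybrid P Q (insert j S))) f - integral\<^sup>L (Pi\<^sub>M I (hybrid P Q S)) f\<bar> \<le> c"
      using insert assms by (intro integral_PiM_diff_le_coordinate) (auto simp: hybrid_def)
    with insert show ?case
      by (simp add: algebra_simps)
  qed simp
  have "Pi\<^sub>M I (hybrid P Q I) = Pi\<^sub>M I (\<lambda>_. P)"
    by (intro PiM_cong) (auto simp: hybrid_def)
  moreover have "Pi\<^sub>M I (hybrid P Q {}) = Pi\<^sub>M I (\<lambda>_. Q)"
    by (intro PiM_cong) (auto simp: hybrid_def)
  ultimately show ?thesis
    using telescope[OF order_refl] by simp
qed

lemma PsiN_dist_le:
  "\<psi> \<in> PsiN p \<Longrightarrow> \<bar>\<psi> x - \<psi> y\<bar> \<le> (1 / real CARD('n)) * (\<Sum>k\<in>UNIV. cp p (x k) (y k) * \<bar>x k - y k\<bar>)"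
  for x y :: "'n::finite \<Rightarrow> real"
  unfolding PsiN_def by blast

lemma continuous_on_PsiN:
  fixes \<psi> :: "('n::finite \<Rightarrow> real) \<Rightarrow> real"
  assumes "\<psi> \<in> PsiN p"
  shows "continuous_on UNIV \<psi>"
proof -
  have "isCont \<psi> x" for x
  proof -
    let ?B = "\<lambda>y. (1 / real CARD('n)) * (\<Sum>k\<in>UNIV. cp p (y k) (x k) * \<bar>y k - x k\<bar>)"
    have "((\<lambda>y. y k) \<longlongrightarrow> x k) (at x)" for k
      using continuous_on_product_coordinates[of k]
      by (metis UNIV_I continuous_on_def tendsto_within_open open_UNIV)
    then have "(?B \<longlongrightarrow> (1 / real CARD('n)) * (\<Sum>k\<in>UNIV. cp p (x k) (x k) * \<bar>x k - x k\<bar>)) (at x)"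
      unfolding cp_def by (intro tendsto_intros) (auto simp: max_def)
    then have "(?B \<longlongrightarrow> 0) (at x)"
      by simp
    then have "((\<lambda>y. \<psi> y - \<psi> x) \<longlongrightarrow> 0) (at x)"
      using PsiN_dist_le[OF assms] by (intro Lim_null_comparison[OF _ \<open>(?B \<longlongrightarrow> 0) (at x)\<close>]) auto
    then show ?thesis
      unfolding isCont_def by (simp add: LIM_zero_iff)
  qed
  then show ?thesis
    by (simp add: continuous_at_imp_continuous_on)
qed

lemma borel_measurable_PsiN:
  fixes \<psi> :: "('n::finite \<Rightarrow> real) \<Rightarrow> real"
  assumes "\<psi> \<in> PsiN p" and "\<And>i. sets (M i) = sets borel"
  shows "\<psi> \<in> borel_measurable (Pi\<^sub>M UNIV M)"
proof -
  have "sets (Pi\<^sub>M UNIV M) = sets (Pi\<^sub>M (UNIV :: 'n set) (\<lambda>_. borel :: real measure))"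
    using assms(2) by (intro sets_PiM_cong) auto
  also have "\<dots> = sets borel"
    by (rule sets_PiM_equal_borel)
  finally have sets_eq: "sets (Pi\<^sub>M UNIV M) = sets borel" .
  show ?thesis
    unfolding measurable_cong_sets[OF sets_eq refl]
    by (rule borel_measurable_continuous_onI[OF continuous_on_PsiN[OF assms(1)]])
qed

lemma integrable_PsiN:
  fixes \<psi> :: "('n::finite \<Rightarrow> real) \<Rightarrow> real"
  assumes p: "1 \<le> p" and M: "\<And>i. M i \<in> Pp p" and \<psi>: "\<psi> \<in> PsiN p"
  shows "integrable (Pi\<^sub>M UNIV M) \<psi>"
proof -
  have prob: "prob_space (M i)" and sets: "sets (M i) = sets borel" for i
    using M by (auto simp: Pp_def)
  interpret prob_space "Pi\<^sub>M UNIV M"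
    by (intro prob_space_PiM prob)
  have weight: "integrable (Pi\<^sub>M UNIV M) (\<lambda>x. fm_weight p (x k))" for k
  proof -
    have "integrable (distr (Pi\<^sub>M UNIV M) (M k) (\<lambda>x. x k)) (fm_weight p)"
      using distr_PiM_component[of UNIV M k] prob integrable_fm_weight[OF p M] by simp
    then show ?thesis
      using borel_measurable_integrable[OF integrable_fm_weight[OF p M]]
      by (subst (asm) integrable_distr_eq) auto
  qed
  define w where "w x = \<bar>\<psi> (\<lambda>_. 0)\<bar> + (1 / real CARD('n)) * (\<Sum>k\<in>UNIV. fm_weight p (x k))"
    for x :: "'n \<Rightarrow> real"
  have "integrable (Pi\<^sub>M UNIV M) w"
    unfolding w_def
    by (intro Bochner_Integration.integrable_add integrable_mult_right
        Bochner_Integration.integrable_sum integrable_const) (simp add: weight)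
  moreover have "\<psi> \<in> borel_measurable (Pi\<^sub>M UNIV M)"
    using \<psi> sets by (rule borel_measurable_PsiN)
  moreover have "AE x in Pi\<^sub>M UNIV M. norm (\<psi> x) \<le> norm (w x)"
  proof (rule AE_I2)
    fix x
    have "\<bar>\<psi> x\<bar> \<le> w x"
      using PsiN_dist_le[OF \<psi>, of x "\<lambda>_. 0"] unfolding w_def by (simp add: fm_weight_def)
    then show "norm (\<psi> x) \<le> norm (w x)"
      using abs_ge_self[of "w x"] by simp
  qed
  ultimately show ?thesis
    by (rule Bochner_Integration.integrable_bound)
qed

lemma abs_mult_diff_le_iff:
  fixes a b c n :: real
  assumes "0 < n"
  shows "\<bar>n * a - n * b\<bar> \<le> c \<longleftrightarrow> \<bar>a - b\<bar> \<le> c / n"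
proof -
  have "\<bar>n * a - n * b\<bar> = n * \<bar>a - b\<bar>"
    using assms by (simp add: right_diff_distrib[symmetric] abs_mult)
  then show ?thesis
    using assms by (simp add: pos_le_divide_eq mult.commute)
qed

lemma PsiN_slice_Fp:
  fixes x :: "'n::finite \<Rightarrow> real"
  assumes "\<psi> \<in> PsiN p"
  shows "(\<lambda>t. real CARD('n) * \<psi> (x(j := t))) \<in> Fp p"
  unfolding Fp_def
proof (intro CollectI allI)
  fix s t :: real
  have "(\<Sum>k\<in>UNIV. cp p ((x(j := s)) k) ((x(j := t)) k) * \<bar>(x(j := s)) k - (x(j := t)) k\<bar>)
      = cp p s t * \<bar>s - t\<bar>"
    by (subst sum.remove[of _ j]) auto
  then have "\<bar>\<psi> (x(j := s)) - \<psi> (x(j := t))\<bar> \<le> (1 / real CARD('n)) * (cp p s t * \<bar>s - t\<bar>)"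
    using PsiN_dist_le[OF assms, of "x(j := s)" "x(j := t)"] by simp
  then show "\<bar>real CARD('n) * \<psi> (x(j := s)) - real CARD('n) * \<psi> (x(j := t))\<bar> \<le> cp p s t * \<bar>s - t\<bar>"
    by (simp add: abs_mult_diff_le_iff)
qed

lemma integral_PiM_PsiN_diff_le_dFM:
  fixes \<psi> :: "('n::finite \<Rightarrow> real) \<Rightarrow> real"
  assumes p: "1 \<le> p" and P: "P \<in> Pp p" and Q: "Q \<in> Pp p" and \<psi>: "\<psi> \<in> PsiN p"
  shows "\<bar>integral\<^sup>L (Pi\<^sub>M UNIV (\<lambda>_. P)) \<psi> - integral\<^sup>L (Pi\<^sub>M UNIV (\<lambda>_. Q)) \<psi>\<bar>
    \<le> real_of_ereal (dFM p P Q)"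
proof -
  have prob: "prob_space P" "prob_space Q"
    using P Q by (simp_all add: Pp_def)
  have int: "integrable (Pi\<^sub>M UNIV (hybrid P Q S)) \<psi>" for S
    by (rule integrable_PsiN[OF p _ \<psi>]) (simp add: hybrid_def P Q)
  have slice: "\<bar>(\<integral>t. \<psi> (x(j := t)) \<partial>P) - (\<integral>t. \<psi> (x(j := t)) \<partial>Q)\<bar>
      \<le> real_of_ereal (dFM p P Q) / real CARD('n)" for x j
    using integral_diff_le_dFM[OF P Q PsiN_slice_Fp[OF \<psi>, of x j]]
    by (simp add: abs_mult_diff_le_iff del: fun_upd_apply)
  have "\<bar>integral\<^sup>L (Pi\<^sub>M UNIV (\<lambda>_. P)) \<psi> - integral\<^sup>L (Pi\<^sub>M UNIV (\<lambda>_. Q)) \<psi>\<bar>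
      \<le> real CARD('n) * (real_of_ereal (dFM p P Q) / real CARD('n))"
    by (rule integral_PiM_diff_le_hybrid[OF prob _ int slice]) simp
  then show ?thesis
    by simp
qed

theorem lemma1:
  fixes p :: real and P Q :: "real measure"
  assumes "p \<ge> 1" and "P \<in> Pp p" and "Q \<in> Pp p"
  shows "dPsi p (PiM (UNIV :: 'n::finite set) (\<lambda>_. P)) (PiM (UNIV :: 'n set) (\<lambda>_. Q))
           \<le> dFM p P Q \<and> dFM p P Q < \<infinity>"
proof
  show "dFM p P Q < \<infinity>"
    using assms(2,3) by (rule dFM_finite)
  show "dPsi p (PiM (UNIV :: 'n::finite set) (\<lambda>_. P)) (PiM (UNIV :: 'n set) (\<lambda>_. Q)) \<le> dFM p P Q"
    unfolding dPsi_def
  proof (rule SUP_least)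
    fix \<psi> :: "('n \<Rightarrow> real) \<Rightarrow> real"
    assume \<psi>: "\<psi> \<in> PsiN p"
    have "integrable (Pi\<^sub>M UNIV (\<lambda>_. P)) \<psi>" "integrable (Pi\<^sub>M UNIV (\<lambda>_. Q)) \<psi>"
      using assms by (auto intro: integrable_PsiN[OF _ _ \<psi>])
    moreover have "ereal \<bar>integral\<^sup>L (Pi\<^sub>M UNIV (\<lambda>_. P)) \<psi> - integral\<^sup>L (Pi\<^sub>M UNIV (\<lambda>_. Q)) \<psi>\<bar>
        \<le> dFM p P Q"
      using integral_PiM_PsiN_diff_le_dFM[OF assms \<psi>] ereal_real_dFM[OF assms(2,3)]
      by (metis ereal_less_eq(3))
    ultimately show "int_diff (Pi\<^sub>M UNIV (\<lambda>_. P)) (Pi\<^sub>M UNIV (\<lambda>_. Q)) \<psi> \<le> dFM p P Q"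
      by (simp add: int_diff_def)
  qed
qed

end
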